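(* For every $A\ge0$ and $T>0$ there is $B\ge0$ (depending only on $A$, $T$ and $f,r$) such that: if $y$ solves $y_t+f(y)_x=y_{xx}+r(y)$ on $[0,1]\times(0,T)$ with $y(0,t)=y(1,t)=0$ and $\|y(\cdot,0)\|_\infty\le A$, then $\|y(\cdot,t)\|_\infty\le B$ for all $t<T$.
   Context: Standing assumptions: $f,r\in C^2(\mathbb R)$ and $\int_{-\infty}^0\frac{dy}{|r(y)|+1}=\int_0^\infty\frac{dy}{|r(y)|+1}=\infty$. Solutions are classical solutions with initial data in $H^1_0(0,1)$. *)

theory Defs
  imports "HOL-Analysis.Analysis"
begin

definition C2 :: "(real \<Rightarrow> real) \<Rightarrow> bool" where
  "C2 g \<longleftrightarrow> (\<exists>g1 g2. (\<forall>x. (g has_real_derivative g1 x) (at x)) \<and>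
                     (\<forall>x. (g1 has_real_derivative g2 x) (at x)) \<and>
                     continuous_on UNIV g2)"

definition osgood :: "(real \<Rightarrow> real) \<Rightarrow> bool" where
  "osgood r \<longleftrightarrow>
     filterlim (\<lambda>a. integral {a..0} (\<lambda>y. 1 / (\<bar>r y\<bar> + 1))) at_top at_bot \<and>
     filterlim (\<lambda>b. integral {0..b} (\<lambda>y. 1 / (\<bar>r y\<bar> + 1))) at_top at_top"

text \<open>Membership in H^1_0(0,1) of a function on [0,1]: it is the primitive of an
  L^2(0,1) function, vanishing at both endpoints.\<close>
definition H10 :: "(real \<Rightarrow> real) \<Rightarrow> bool" where
  "H10 u \<longleftrightarrow> (\<exists>g. g absolutely_integrable_on {0..1} \<and>
                   (\<lambda>x. (g x)\<^sup>2) integrable_on {0..1} \<and>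
                   (\<forall>x\<in>{0..1}. u x = integral {0..x} g)) \<and> u 0 = 0 \<and> u 1 = 0"

definition classical_sol ::
  "(real \<Rightarrow> real) \<Rightarrow> (real \<Rightarrow> real) \<Rightarrow> real \<Rightarrow> (real \<Rightarrow> real \<Rightarrow> real) \<Rightarrow> bool" where
  "classical_sol f r T y \<longleftrightarrow>
     continuous_on ({0..1} \<times> {0..<T}) (\<lambda>(x,t). y x t) \<and>
     (\<exists>yt yx yxx F.
        continuous_on ({0<..<1} \<times> {0<..<T}) (\<lambda>(x,t). yt x t) \<and>
        continuous_on ({0<..<1} \<times> {0<..<T}) (\<lambda>(x,t). yx x t) \<and>
        continuous_on ({0<..<1} \<times> {0<..<T}) (\<lambda>(x,t). yxx x t) \<and>
        (\<forall>x\<in>{0<..<1}. \<forall>t\<in>{0<..<T}.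
           ((\<lambda>s. y x s) has_real_derivative yt x t) (at t) \<and>
           ((\<lambda>z. y z t) has_real_derivative yx x t) (at x) \<and>
           ((\<lambda>z. yx z t) has_real_derivative yxx x t) (at x) \<and>
           ((\<lambda>z. f (y z t)) has_real_derivative F x t) (at x) \<and>
           yt x t + F x t = yxx x t + r (y x t))) \<and>
     (\<forall>t\<in>{0<..<T}. y 0 t = 0 \<and> y 1 t = 0) \<and>
     H10 (\<lambda>x. y x 0)"

end

theory Submission
  imports Defs
begin

text \<open>Let \<open>G\<close> be the primitive of \<open>1 / (\<bar>r\<bar> + 1)\<close> from \<open>0\<close>; it is nondecreasing and tends
  to \<open>\<infinity>\<close> by the Osgood condition. If \<open>G(y) - t\<close> ever reached a level \<open>c\<close> exceeding
  its initial and boundary values, then at the first such time \<open>t\<^sub>0\<close> the solution would have a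
  positive interior spatial maximum \<open>x\<^sub>0\<close>, where \<open>y\<^sub>x = 0\<close> and \<open>y\<^sub>x\<^sub>x \<le> 0\<close>, so \<open>y\<^sub>t \<le> r(y)\<close> and
  \<open>d/dt (G(y) - t) \<le> r(y) / (\<bar>r(y)\<bar> + 1) - 1 < 0\<close>, contradicting that the level is reached from
  below. Hence \<open>G(y) < c + T\<close>, which bounds \<open>y\<close> from above; the lower bound is the upper bound
  for \<open>-y\<close>, which solves the equation with the reflected nonlinearities \<open>-f(-u)\<close>, \<open>-r(-u)\<close>.\<close>

lemma DERIV_nonneg_if_eventually_le_left:
  fixes h :: "real \<Rightarrow> real"
  assumes der: "(h has_real_derivative D) (at t)"
    and le: "\<forall>\<^sub>F s in at_left t. h s \<le> h t"
  shows "0 \<le> D"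
proof (rule tendsto_lowerbound)
  show "((\<lambda>s. (h s - h t) / (s - t)) \<longlongrightarrow> D) (at_left t)"
    using der unfolding has_field_derivative_iff by (rule filterlim_mono) (simp_all add: at_le)
  have "\<forall>\<^sub>F s in at_left t. s < t"
    by (simp add: eventually_at_filter)
  with le show "\<forall>\<^sub>F s in at_left t. 0 \<le> (h s - h t) / (s - t)"
    by eventually_elim (simp add: divide_nonpos_neg)
qed simp

lemma le_if_eventually_le_at_left:
  fixes \<phi> :: "real \<Rightarrow> real"
  assumes "(\<phi> \<longlongrightarrow> \<phi> b) (at_left b)" "\<forall>\<^sub>F s in at_left b. \<phi> s \<le> c"
  shows "\<phi> b \<le> c"
  using assms tendsto_upperbound trivial_limit_at_left_real by blast

lemma DERIV2_nonpos_at_right_max: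
  fixes u u' :: "real \<Rightarrow> real"
  assumes "x < b"
    and du: "\<And>z. z \<in> {x..<b} \<Longrightarrow> (u has_real_derivative u' z) (at z)"
    and du': "(u' has_real_derivative D) (at x)" and u'x: "u' x = 0"
    and max: "\<And>z. z \<in> {x..<b} \<Longrightarrow> u z \<le> u x"
  shows "D \<le> 0"
proof (rule ccontr)
  assume "\<not> D \<le> 0"
  then obtain d where "d > 0" and inc: "\<And>h. 0 < h \<Longrightarrow> h < d \<Longrightarrow> u' x < u' (x + h)"
    using DERIV_pos_inc_right[OF du'] by auto
  define h where "h = min (d / 2) ((b - x) / 2)"
  have h: "0 < h" "h < d" "x + h < b"
    using \<open>d > 0\<close> \<open>x < b\<close> by (auto simp: h_def min_def field_simps)
  obtain z where z: "x < z" "z < x + h" and mvt: "u (x + h) - u x = h * u' z"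
    using MVT2[of x "x + h" u u'] h du by auto
  have "u' z > 0"
    using inc[of "z - x"] z h u'x by auto
  with mvt h(1) have "u (x + h) > u x"
    using mult_pos_pos[of h "u' z"] by linarith
  with max[of "x + h"] h show False by simp
qed

lemma less_if_DERIV_pos_on_positives:
  fixes G g :: "real \<Rightarrow> real"
  assumes "\<And>z. 0 < z \<Longrightarrow> (G has_real_derivative g z) (at z)" and "\<And>z. 0 < z \<Longrightarrow> 0 < g z"
    and "0 < a" "a < b"
  shows "G a < G b"
proof (rule DERIV_pos_imp_increasing[OF \<open>a < b\<close>])
  fix z assume "a \<le> z"
  with \<open>0 < a\<close> have "0 < z" by simp
  then show "\<exists>D. (G has_real_derivative D) (at z) \<and> 0 < D"
    using assms(1,2) by blast
qed

lemma first_hitting_time: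
  fixes \<phi> :: "real \<times> real \<Rightarrow> real"
  assumes cont: "continuous_on ({a..b} \<times> {0..t1}) \<phi>"
    and x1: "x1 \<in> {a..b}" and "0 \<le> t1" and hit: "c \<le> \<phi> (x1, t1)"
    and init: "\<And>x. x \<in> {a..b} \<Longrightarrow> \<phi> (x, 0) < c"
  obtains xs ts where "xs \<in> {a..b}" "ts \<in> {0<..t1}" "\<phi> (xs, ts) = c"
    "\<And>x s. x \<in> {a..b} \<Longrightarrow> s \<in> {0..<ts} \<Longrightarrow> \<phi> (x, s) < c"
    "\<And>x. x \<in> {a..b} \<Longrightarrow> \<phi> (x, ts) \<le> c"
proof -
  define K where "K = {a..b} \<times> {0..t1}"
  define P where "P = K \<inter> \<phi> -` {c..}"
  have "closed P"
    unfolding P_def K_def by (rule continuous_closed_preimage[OF cont]) (auto simp: closed_Times)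
  then have "compact P"
    using compact_Int_closed[of K P] by (simp add: P_def K_def compact_Times Int_absorb1)
  then have "compact (snd ` P)"
    by (intro compact_continuous_image continuous_intros)
  moreover have "(x1, t1) \<in> P"
    using x1 \<open>0 \<le> t1\<close> hit by (auto simp: P_def K_def)
  ultimately obtain ts where "ts \<in> snd ` P" and ts_min: "\<And>t. t \<in> snd ` P \<Longrightarrow> ts \<le> t"
    using compact_attains_inf[of "snd ` P"] by blast
  then obtain xs where xs: "xs \<in> {a..b}" "ts \<in> {0..t1}" "c \<le> \<phi> (xs, ts)"
    by (auto simp: P_def K_def)
  have below: "\<phi> (x, s) < c" if "x \<in> {a..b}" "s \<in> {0..<ts}" for x s
  proof (rule ccontr)
    assume "\<not> \<phi> (x, s) < c"
    then have "s \<in> snd ` P"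
      using that xs(2) by (force simp: P_def K_def)
    with ts_min[of s] that show False by simp
  qed
  have "ts \<noteq> 0"
    using xs init by force
  then have "0 < ts" using xs by simp
  have at_ts: "\<phi> (x, ts) \<le> c" if x: "x \<in> {a..b}" for x
  proof (rule le_if_eventually_le_at_left[where \<phi> = "\<lambda>s. \<phi> (x, s)"])
    have "continuous_on {0..ts} (\<lambda>s. \<phi> (x, s))"
      by (rule continuous_on_compose2[OF cont]) (use x xs in \<open>auto intro!: continuous_intros\<close>)
    then show "((\<lambda>s. \<phi> (x, s)) \<longlongrightarrow> \<phi> (x, ts)) (at_left ts)"
      using \<open>0 < ts\<close> by (rule continuous_on_Icc_at_leftD)
    show "\<forall>\<^sub>F s in at_left ts. \<phi> (x, s) \<le> c"
      using eventually_at_left_real[OF \<open>0 < ts\<close>] by eventually_elim (simp add: below[OF x] less_imp_le)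
  qed
  have phi_eq: "\<phi> (xs, ts) = c"
    using at_ts[OF xs(1)] xs(3) by simp
  show thesis
    by (rule that[OF xs(1) _ _ below at_ts]) (use xs \<open>0 < ts\<close> phi_eq in auto)
qed

lemma classical_sol_time_deriv_le_at_max:
  assumes fd: "\<And>u. f differentiable (at u)" and sol: "classical_sol f r T y"
    and xs: "xs \<in> {0<..<1}" and ts: "ts \<in> {0<..<T}"
    and max: "\<And>x. x \<in> {0<..<1} \<Longrightarrow> y x ts \<le> y xs ts"
  obtains D where "((\<lambda>s. y xs s) has_real_derivative D) (at ts)" "D \<le> r (y xs ts)"
proof -
  from sol obtain yt yx yxx F where eqs: "\<forall>x\<in>{0<..<1}. \<forall>t\<in>{0<..<T}.
           ((\<lambda>s. y x s) has_real_derivative yt x t) (at t) \<and>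
           ((\<lambda>z. y z t) has_real_derivative yx x t) (at x) \<and>
           ((\<lambda>z. yx z t) has_real_derivative yxx x t) (at x) \<and>
           ((\<lambda>z. f (y z t)) has_real_derivative F x t) (at x) \<and>
           yt x t + F x t = yxx x t + r (y x t)"
    unfolding classical_sol_def by blast
  have dyx: "((\<lambda>z. y z ts) has_real_derivative yx x ts) (at x)" if "x \<in> {0<..<1}" for x
    using eqs that ts by blast
  note eq = eqs[rule_format, OF xs ts]
  have yx0: "yx xs ts = 0"
  proof (rule DERIV_local_max[OF dyx[OF xs]])
    show "0 < min xs (1 - xs)" using xs by auto
    show "\<forall>z. \<bar>xs - z\<bar> < min xs (1 - xs) \<longrightarrow> y z ts \<le> y xs ts"
      using max by (auto simp: abs_if split: if_splits)
  qed
  have "yxx xs ts \<le> 0"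
    by (rule DERIV2_nonpos_at_right_max[where b = 1, OF _ dyx _ yx0 max]) (use xs eq in auto)
  moreover obtain f' where "(f has_real_derivative f') (at (y xs ts))"
    using fd real_differentiable_def by blast
  then have "((\<lambda>z. f (y z ts)) has_real_derivative f' * yx xs ts) (at xs)"
    using DERIV_chain2[OF _ dyx[OF xs]] by blast
  then have "F xs ts = 0"
    using DERIV_unique eq yx0 by fastforce
  ultimately show thesis
    using eq by (intro that[of "yt xs ts"]) auto
qed

lemma classical_sol_potential_not_hit_from_below:
  fixes f r G g :: "real \<Rightarrow> real" and y :: "real \<Rightarrow> real \<Rightarrow> real"
  assumes fd: "\<And>u. f differentiable (at u)"
    and Gd: "\<And>z. 0 < z \<Longrightarrow> (G has_real_derivative g z) (at z)"
    and gpos: "\<And>z. 0 < z \<Longrightarrow> 0 < g z" and gr: "\<And>z. 0 < z \<Longrightarrow> g z * r z < 1"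
    and sol: "classical_sol f r T y" and xs: "xs \<in> {0<..<1}" and ts: "ts \<in> {0<..<T}"
    and pos: "0 < y xs ts" and max: "\<And>x. x \<in> {0<..<1} \<Longrightarrow> y x ts \<le> y xs ts"
    and below: "\<forall>\<^sub>F s in at_left ts. G (y xs s) - s \<le> G (y xs ts) - ts"
  shows False
proof -
  obtain D where dyt: "(y xs has_real_derivative D) (at ts)" and D: "D \<le> r (y xs ts)"
    using classical_sol_time_deriv_le_at_max[OF fd sol xs ts max] by blast
  have "((\<lambda>s. G (y xs s)) has_real_derivative g (y xs ts) * D) (at ts)"
    using DERIV_chain2[OF _ dyt] Gd[OF pos] by simp
  then have "((\<lambda>s. G (y xs s) - s) has_real_derivative g (y xs ts) * D - 1) (at ts)"
    by (intro derivative_eq_intros) auto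
  with below have "1 \<le> g (y xs ts) * D"
    using DERIV_nonneg_if_eventually_le_left by fastforce
  also have "\<dots> \<le> g (y xs ts) * r (y xs ts)"
    using D gpos[OF pos] by simp
  finally show False
    using gr[OF pos] by simp
qed

lemma classical_sol_potential_below:
  fixes f r G g :: "real \<Rightarrow> real" and y :: "real \<Rightarrow> real \<Rightarrow> real"
  assumes fd: "\<And>u. f differentiable (at u)"
    and Gc: "continuous_on UNIV G" and Gm: "mono G"
    and Gd: "\<And>z. 0 < z \<Longrightarrow> (G has_real_derivative g z) (at z)"
    and gpos: "\<And>z. 0 < z \<Longrightarrow> 0 < g z" and gr: "\<And>z. 0 < z \<Longrightarrow> g z * r z < 1"
    and sol: "classical_sol f r T y"
    and init: "\<And>x. x \<in> {0..1} \<Longrightarrow> G (y x 0) < c" and G0: "G 0 < c"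
    and t1: "t1 \<in> {0..<T}" and x1: "x1 \<in> {0..1}"
  shows "G (y x1 t1) - t1 < c"
proof (rule ccontr)
  assume hit1: "\<not> G (y x1 t1) - t1 < c"
  from sol have ycont: "continuous_on ({0..1} \<times> {0..<T}) (\<lambda>(x, t). y x t)"
    and bd: "\<And>t. t \<in> {0<..<T} \<Longrightarrow> y 0 t = 0 \<and> y 1 t = 0"
    unfolding classical_sol_def by auto
  define \<phi> where "\<phi> p = G (y (fst p) (snd p)) - snd p" for p
  have "{0..1} \<times> {0..t1} \<subseteq> {0..1} \<times> {0..<T}"
    using t1 by auto
  then have "continuous_on ({0..1} \<times> {0..t1}) (\<lambda>p. y (fst p) (snd p))"
    using continuous_on_subset[OF ycont] by (simp add: case_prod_beta')
  then have "continuous_on ({0..1} \<times> {0..t1}) \<phi>"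
    unfolding \<phi>_def by (intro continuous_intros continuous_on_compose2[OF Gc]) auto
  then obtain xs ts where xs: "xs \<in> {0..1}" and ts: "ts \<in> {0<..t1}" and hit: "\<phi> (xs, ts) = c"
    and below: "\<And>x s. x \<in> {0..1} \<Longrightarrow> s \<in> {0..<ts} \<Longrightarrow> \<phi> (x, s) < c"
    and at_ts: "\<And>x. x \<in> {0..1} \<Longrightarrow> \<phi> (x, ts) \<le> c"
    by (rule first_hitting_time[of 0 1 t1 \<phi> x1 c]) (use x1 t1 hit1 init in \<open>auto simp: \<phi>_def\<close>)
  have tsT: "ts \<in> {0<..<T}"
    using ts t1 by auto
  have G_ys: "G (y xs ts) = c + ts"
    using hit by (simp add: \<phi>_def)
  then have pos: "0 < y xs ts"
    using G0 ts monoD[OF Gm, of "y xs ts" 0] by fastforce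
  have "xs \<noteq> 0" "xs \<noteq> 1"
    using hit bd[OF tsT] G0 ts by (auto simp: \<phi>_def)
  with xs have xsI: "xs \<in> {0<..<1}" by auto
  have max: "y x ts \<le> y xs ts" if "x \<in> {0<..<1}" for x
    using at_ts[of x] that less_if_DERIV_pos_on_positives[OF Gd gpos pos, of "y x ts"] G_ys
    by (force simp: \<phi>_def)
  have "\<forall>\<^sub>F s in at_left ts. s \<in> {0<..<ts}"
    using tsT by (intro eventually_at_left_real) auto
  then have "\<forall>\<^sub>F s in at_left ts. G (y xs s) - s \<le> G (y xs ts) - ts"
  proof eventually_elim
    case (elim s)
    then have "\<phi> (xs, s) < \<phi> (xs, ts)"
      using below[OF xs, of s] hit by simp
    then show ?case
      by (simp add: \<phi>_def)
  qed
  then show False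
    using classical_sol_potential_not_hit_from_below[OF fd Gd gpos gr sol xsI tsT pos max] by simp
qed

text \<open>For \<open>z < 0\<close> the interval \<open>{0..z}\<close> is empty, so the potential vanishes there
  instead of being a signed integral.\<close>

definition osgood_potential :: "(real \<Rightarrow> real) \<Rightarrow> real \<Rightarrow> real" where
  "osgood_potential r z = integral {0..z} (\<lambda>y. 1 / (\<bar>r y\<bar> + 1))"

lemma osgood_weight_continuous:
  assumes "continuous_on UNIV r"
  shows "continuous_on S (\<lambda>y. 1 / (\<bar>r y\<bar> + 1 :: real))"
proof -
  have "continuous_on S r"
    using assms by (rule continuous_on_subset) simp
  then show ?thesis
    by (intro continuous_intros) (auto simp: add_pos_nonneg)
qed

lemma osgood_potential_has_real_derivative:
  assumes "continuous_on UNIV r" and "0 < z"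
  shows "(osgood_potential r has_real_derivative 1 / (\<bar>r z\<bar> + 1)) (at z)"
proof -
  have "(osgood_potential r has_real_derivative 1 / (\<bar>r z\<bar> + 1)) (at z within {0..z + 1})"
    unfolding osgood_potential_def
    by (rule integral_has_real_derivative[OF osgood_weight_continuous[OF assms(1)]]) (use assms in simp)
  then show ?thesis
    using assms(2) at_within_interior[of z "{0..z + 1}"] by simp
qed

lemma osgood_potential_mono:
  assumes "continuous_on UNIV r"
  shows "mono (osgood_potential r)"
proof (rule monoI)
  fix a b :: real assume "a \<le> b"
  show "osgood_potential r a \<le> osgood_potential r b"
    unfolding osgood_potential_def
    by (rule integral_subset_le) (use \<open>a \<le> b\<close> in \<open>auto intro!: integrable_continuous_interval
        osgood_weight_continuous assms simp: add_pos_nonneg\<close>)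
qed

lemma osgood_potential_continuous:
  assumes "continuous_on UNIV r"
  shows "continuous_on UNIV (osgood_potential r)"
proof (rule continuous_at_imp_continuous_on, intro ballI)
  fix z :: real
  define n where "n = \<bar>z\<bar> + 1"
  have "continuous_on {0..n} (\<lambda>z. integral {0..z} (\<lambda>y. 1 / (\<bar>r y\<bar> + 1)))"
    by (intro indefinite_integral_continuous_1 integrable_continuous_interval
        osgood_weight_continuous assms)
  then have "continuous_on {-n..n} (\<lambda>z. integral {0..max z 0} (\<lambda>y. 1 / (\<bar>r y\<bar> + 1)))"
  proof (rule continuous_on_compose2)
    show "continuous_on {-n..n} (\<lambda>z. max z (0::real))"
      by (intro continuous_intros)
  qed (auto simp: n_def)
  moreover have "integral {0..max z 0} (\<lambda>y. 1 / (\<bar>r y\<bar> + 1)) = osgood_potential r z" for z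
    by (cases "z < 0") (simp_all add: osgood_potential_def max_def)
  moreover have "z \<in> interior {-n..n}"
    by (auto simp: n_def)
  ultimately show "isCont (osgood_potential r) z"
    using continuous_on_interior by fastforce
qed

lemma osgood_potential_at_top:
  "osgood r \<Longrightarrow> filterlim (osgood_potential r) at_top at_top"
  unfolding osgood_def osgood_potential_def by simp

lemma osgood_reflect:
  assumes "osgood r"
  shows "osgood (\<lambda>u. - r (- u))"
proof -
  have eq: "integral {a..b} (\<lambda>y. 1 / (\<bar>- r (- y)\<bar> + 1)) = integral {-b..-a} (\<lambda>y. 1 / (\<bar>r y\<bar> + 1))"
    for a b :: real
    using Henstock_Kurzweil_Integration.integral_reflect_real[of "-a" "-b" "\<lambda>y. 1 / (\<bar>r y\<bar> + 1)"] by simp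
  show ?thesis
    using assms unfolding osgood_def eq filterlim_at_bot_mirror[where f = "\<lambda>a. integral {-0..-a} _"]
      filterlim_at_top_mirror[where f = "\<lambda>b. integral {-b..-0} _"]
    by simp
qed

lemma classical_sol_upper_bound:
  fixes f r :: "real \<Rightarrow> real"
  assumes fd: "\<And>u. f differentiable (at u)" and rc: "continuous_on UNIV r" and osg: "osgood r"
  obtains B where "\<And>y t x. classical_sol f r T y \<Longrightarrow> \<forall>x\<in>{0..1}. y x 0 \<le> A
                      \<Longrightarrow> t \<in> {0..<T} \<Longrightarrow> x \<in> {0..1} \<Longrightarrow> y x t \<le> B"
proof -
  define G where "G = osgood_potential r"
  define g where "g z = 1 / (\<bar>r z\<bar> + 1)" for z
  have Gm: "mono G"
    unfolding G_def using osgood_potential_mono[OF rc] .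
  have Gc: "continuous_on UNIV G"
    unfolding G_def using osgood_potential_continuous[OF rc] .
  have gpos: "0 < g z" for z
    by (simp add: g_def add_pos_nonneg)
  have Gd: "(G has_real_derivative g z) (at z)" if "0 < z" for z
    unfolding G_def g_def using osgood_potential_has_real_derivative[OF rc that] .
  have gr: "g z * r z < 1" for z
  proof -
    have "r z < \<bar>r z\<bar> + 1" by simp
    then show ?thesis by (simp add: g_def divide_simps add_pos_nonneg)
  qed
  define c where "c = G (max A 0 + 2)"
  have "G (max A 0 + 1) < c"
    unfolding c_def by (rule less_if_DERIV_pos_on_positives[OF Gd gpos]) auto
  then have G_le_c: "G z < c" if "z \<le> max A 0 + 1" for z
    using monoD[OF Gm that] by simp
  obtain N where N: "\<And>z. N \<le> z \<Longrightarrow> c + T \<le> G z"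
    using osgood_potential_at_top[OF osg] unfolding G_def filterlim_at_top eventually_at_top_linorder
    by blast
  show thesis
  proof (rule that)
    fix y :: "real \<Rightarrow> real \<Rightarrow> real" and t x :: real
    assume sol: "classical_sol f r T y" and init: "\<forall>x\<in>{0..1}. y x 0 \<le> A"
      and t: "t \<in> {0..<T}" and x: "x \<in> {0..1}"
    have "G (y z 0) < c" if "z \<in> {0..1}" for z
      using init that by (intro G_le_c) force
    moreover have "G 0 < c"
      by (rule G_le_c) simp
    ultimately have "G (y x t) - t < c"
      by (intro classical_sol_potential_below[OF fd Gc Gm Gd gpos gr sol _ _ t x])
    then show "y x t \<le> N"
      using N[of "y x t"] t by fastforce
  qed
qed

lemma C2_differentiable: "C2 g \<Longrightarrow> g differentiable (at x)"
  unfolding C2_def by (meson real_differentiable_def)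

lemma differentiable_reflect:
  fixes f :: "real \<Rightarrow> real"
  assumes "f differentiable (at (- u))"
  shows "(\<lambda>u. - f (- u)) differentiable (at u)"
proof -
  have "(\<lambda>u. f (- u)) differentiable (at u)"
    using differentiable_compose[of f uminus u UNIV] assms by simp
  then show ?thesis
    by (rule differentiable_minus)
qed

lemma H10_uminus:
  assumes "H10 u"
  shows "H10 (\<lambda>x. - u x)"
proof -
  from assms obtain g where g: "g absolutely_integrable_on {0..1}"
    "(\<lambda>x. (g x)\<^sup>2) integrable_on {0..1}" "\<forall>x\<in>{0..1}. u x = integral {0..x} g"
    and "u 0 = 0" "u 1 = 0"
    unfolding H10_def by blast
  then show ?thesis
    unfolding H10_def
    by (intro conjI exI[of _ "\<lambda>x. - g x"])
      (auto simp: integral_neg intro: absolutely_integrable_scaleR_left[OF g(1), of "-1", simplified])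
qed

lemma classical_sol_reflect:
  assumes "classical_sol f r T y"
  shows "classical_sol (\<lambda>u. - f (- u)) (\<lambda>u. - r (- u)) T (\<lambda>x t. - y x t)"
proof -
  from assms obtain yt yx yxx F where
    yc: "continuous_on ({0..1} \<times> {0..<T}) (\<lambda>(x,t). y x t)" and
    c1: "continuous_on ({0<..<1} \<times> {0<..<T}) (\<lambda>(x,t). yt x t)" and
    c2: "continuous_on ({0<..<1} \<times> {0<..<T}) (\<lambda>(x,t). yx x t)" and
    c3: "continuous_on ({0<..<1} \<times> {0<..<T}) (\<lambda>(x,t). yxx x t)" and
    eq: "\<forall>x\<in>{0<..<1}. \<forall>t\<in>{0<..<T}.
           ((\<lambda>s. y x s) has_real_derivative yt x t) (at t) \<and>
           ((\<lambda>z. y z t) has_real_derivative yx x t) (at x) \<and>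
           ((\<lambda>z. yx z t) has_real_derivative yxx x t) (at x) \<and>
           ((\<lambda>z. f (y z t)) has_real_derivative F x t) (at x) \<and>
           yt x t + F x t = yxx x t + r (y x t)" and
    bd: "\<forall>t\<in>{0<..<T}. y 0 t = 0 \<and> y 1 t = 0" and
    h: "H10 (\<lambda>x. y x 0)"
    unfolding classical_sol_def by blast
  have "((\<lambda>s. - y x s) has_real_derivative - yt x t) (at t) \<and>
           ((\<lambda>z. - y z t) has_real_derivative - yx x t) (at x) \<and>
           ((\<lambda>z. - yx z t) has_real_derivative - yxx x t) (at x) \<and>
           ((\<lambda>z. - f (- (- y z t))) has_real_derivative - F x t) (at x) \<and>
           - yt x t + - F x t = - yxx x t + - r (- (- y x t))"
    if "x \<in> {0<..<1}" "t \<in> {0<..<T}" for x t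
    using eq[rule_format, OF that] by (auto intro!: derivative_intros)
  then show ?thesis
    unfolding classical_sol_def using bd H10_uminus[OF h] yc c1 c2 c3
    by (intro conjI exI[of _ "\<lambda>x t. - yt x t"] exI[of _ "\<lambda>x t. - yx x t"]
        exI[of _ "\<lambda>x t. - yxx x t"] exI[of _ "\<lambda>x t. - F x t"])
      (auto simp: case_prod_beta' intro: continuous_on_minus)
qed

lemma classical_sol_abs_bound:
  fixes f r :: "real \<Rightarrow> real"
  assumes fd: "\<And>u. f differentiable (at u)" and rc: "continuous_on UNIV r" and osg: "osgood r"
  obtains B where "\<And>y t x. classical_sol f r T y \<Longrightarrow> \<forall>x\<in>{0..1}. \<bar>y x 0\<bar> \<le> A
                      \<Longrightarrow> t \<in> {0..<T} \<Longrightarrow> x \<in> {0..1} \<Longrightarrow> \<bar>y x t\<bar> \<le> B"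
proof -
  have rc': "continuous_on UNIV (\<lambda>u. - r (- u))"
    by (intro continuous_intros continuous_on_compose2[OF rc]) auto
  obtain B1 where B1: "\<And>y t x. classical_sol f r T y \<Longrightarrow> \<forall>x\<in>{0..1}. y x 0 \<le> A
                      \<Longrightarrow> t \<in> {0..<T} \<Longrightarrow> x \<in> {0..1} \<Longrightarrow> y x t \<le> B1"
    using classical_sol_upper_bound[OF fd rc osg] by blast
  obtain B2 where B2: "\<And>y t x. classical_sol (\<lambda>u. - f (- u)) (\<lambda>u. - r (- u)) T y
                      \<Longrightarrow> \<forall>x\<in>{0..1}. y x 0 \<le> A
                      \<Longrightarrow> t \<in> {0..<T} \<Longrightarrow> x \<in> {0..1} \<Longrightarrow> y x t \<le> B2"
    using classical_sol_upper_bound[OF differentiable_reflect[OF fd] rc' osgood_reflect[OF osg]]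
    by blast
  show thesis
  proof (rule that)
    fix y :: "real \<Rightarrow> real \<Rightarrow> real" and t x :: real
    assume sol: "classical_sol f r T y" and init: "\<forall>x\<in>{0..1}. \<bar>y x 0\<bar> \<le> A"
      and t: "t \<in> {0..<T}" and x: "x \<in> {0..1}"
    have "y x t \<le> B1"
      using B1[OF sol _ t x] init by force
    moreover have "- y x t \<le> B2"
      using B2[OF classical_sol_reflect[OF sol] _ t x] init by force
    ultimately show "\<bar>y x t\<bar> \<le> max B1 B2"
      by linarith
  qed
qed

theorem lemma1:
  fixes f r :: "real \<Rightarrow> real"
  assumes "C2 f" and "C2 r" and "osgood r"
  shows "\<forall>A\<ge>0. \<forall>T>0. \<exists>B\<ge>0. \<forall>y. classical_sol f r T y \<and> (\<forall>x\<in>{0..1}. \<bar>y x 0\<bar> \<le> A)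
            \<longrightarrow> (\<forall>t\<in>{0..<T}. \<forall>x\<in>{0..1}. \<bar>y x t\<bar> \<le> B)"
proof (intro allI impI)
  fix A T :: real
  have "continuous_on UNIV r"
    using C2_differentiable[OF assms(2)]
    by (simp add: continuous_at_imp_continuous_on differentiable_imp_continuous_within)
  then obtain B where B: "\<And>y t x. classical_sol f r T y \<Longrightarrow> \<forall>x\<in>{0..1}. \<bar>y x 0\<bar> \<le> A
                      \<Longrightarrow> t \<in> {0..<T} \<Longrightarrow> x \<in> {0..1} \<Longrightarrow> \<bar>y x t\<bar> \<le> B"
    using classical_sol_abs_bound[OF C2_differentiable[OF assms(1)] _ assms(3)] by blast
  show "\<exists>B\<ge>0. \<forall>y. classical_sol f r T y \<and> (\<forall>x\<in>{0..1}. \<bar>y x 0\<bar> \<le> A)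
            \<longrightarrow> (\<forall>t\<in>{0..<T}. \<forall>x\<in>{0..1}. \<bar>y x t\<bar> \<le> B)"
    using B by (intro exI[of _ "max 0 B"]) force
qed

end
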